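(* Let $G$ be a locally compact abelian group with identity $e$, $\gamma\in\Gamma$, $s\ge0$, and assume that \[ \sup_{\xi\in G^\wedge}\frac{|\xi(h)-1|}{(1+\gamma(\xi)^2)^s}\longrightarrow0\quad\text{as } h\to e \] (in the sense that for every $\epsilon>0$ there is an open neighbourhood $U_\epsilon$ of $e$ with $\frac{|\xi(h)-1|}{(1+\gamma(\xi)^2)^s}\le\epsilon$ for all $h\in U_\epsilon$, $\xi\in G^\wedge$). Then there is a function $C:G\to[0,\infty]$ with $C(h)\to0$ as $h\to e$ (in the same sense) such that for every $f\in H^s_\gamma(G)$ and every $h\in G$, \[ \int_G|f(xh)-f(x)|^2\,d\mu_G(x)\le C(h)\,\|f\|^2_{H^s_\gamma(G)}. \]
   Context: $G$ is a locally compact abelian group with Haar measure $\mu_G$; $G^\wedge$ is its dual group (continuous homomorphisms $G\to\{z\in\mathbb C:|z|=1\}$, a locally compact abelian group under pointwise multiplication) with Haar measure $\mu_{G^\wedge}$ normalized so that the Plancherel theorem and Fourier inversion hold. For $f\in L^1_{\mu_G}(G)$, $\hat f(\xi)=\int_G\overline{\xi(x)}f(x)\,d\mu_G(x)$, extended to $L^2$ by Plancherel. $\Gamma$ is the set of functions $\gamma:G^\wedge\to[0,\infty)$ for which there is a constant $c_\gamma$ with $\gamma(\alpha\beta)\le c_\gamma[\gamma(\alpha)+\gamma(\beta)]$ for all $\alpha,\beta\in G^\wedge$. For $\gamma\in\Gamma$ and real $s\ge0$, $H^s_\gamma(G)$ is the set of $f\in L^2_{\mu_G}(G)$ with $\|f\|_{H^s_\gamma(G)}=\left(\int_{G^\wedge}(1+\gamma(\xi)^2)^s|\hat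 f(\xi)|^2\,d\mu_{G^\wedge}(\xi)\right)^{1/2}<\infty$. *)

theory Defs
  imports "HOL-Analysis.Analysis"
begin

text \<open>The LCA group G is a type of class topological_ab_group_add (written additively,
  identity 0, so xh becomes x + h).\<close>

definition dual_group :: "('g::topological_ab_group_add \<Rightarrow> complex) set" where
  "dual_group = {\<xi>. continuous_on UNIV \<xi> \<and> (\<forall>x. cmod (\<xi> x) = 1)
                      \<and> (\<forall>x y. \<xi> (x + y) = \<xi> x * \<xi> y)}"

definition dual_topology :: "('g::topological_ab_group_add \<Rightarrow> complex) topology" where
  "dual_topology = topology_generated_by
     {{\<xi>\<in>dual_group. \<xi> ` K \<subseteq> V} | K V. compact K \<and> open V}"

definition borel_of :: "'a topology \<Rightarrow> 'a set set" where
  "borel_of X = sigma_sets (topspace X) {U. openin X U}"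

definition radon_on :: "'a topology \<Rightarrow> 'a measure \<Rightarrow> bool" where
  "radon_on X M \<longleftrightarrow> space M = topspace X \<and> sets M = borel_of X
     \<and> (\<forall>K. compactin X K \<longrightarrow> emeasure M K < \<infinity>)
     \<and> (\<forall>A\<in>sets M. emeasure M A = (INF U\<in>{U. openin X U \<and> A \<subseteq> U}. emeasure M U))
     \<and> (\<forall>U. openin X U \<longrightarrow> emeasure M U = (SUP K\<in>{K. compactin X K \<and> K \<subseteq> U}. emeasure M K))"

definition haar_measure :: "'g::topological_ab_group_add measure \<Rightarrow> bool" where
  "haar_measure M \<longleftrightarrow> radon_on euclidean M \<and> emeasure M UNIV \<noteq> 0
     \<and> (\<forall>A\<in>sets M. \<forall>x. emeasure M ((\<lambda>y. x + y) ` A) = emeasure M A)"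

definition dual_haar_measure :: "('g::topological_ab_group_add \<Rightarrow> complex) measure \<Rightarrow> bool" where
  "dual_haar_measure N \<longleftrightarrow> radon_on dual_topology N \<and> emeasure N dual_group \<noteq> 0
     \<and> (\<forall>A\<in>sets N. \<forall>\<eta>\<in>dual_group.
           emeasure N ((\<lambda>\<xi> x. \<eta> x * \<xi> x) ` A) = emeasure N A)"

definition L2 :: "'a measure \<Rightarrow> ('a \<Rightarrow> complex) set" where
  "L2 M = {f. f \<in> borel_measurable M \<and> integrable M (\<lambda>x. (cmod (f x))\<^sup>2)}"

definition fourier_L1 :: "'g measure \<Rightarrow> ('g \<Rightarrow> complex) \<Rightarrow> ('g \<Rightarrow> complex) \<Rightarrow> complex" where
  "fourier_L1 M f \<xi> = (\<integral>x. cnj (\<xi> x) * f x \<partial>M)"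

definition plancherel_normalized :: "'g measure \<Rightarrow> ('g \<Rightarrow> complex) measure \<Rightarrow> bool" where
  "plancherel_normalized M N \<longleftrightarrow>
     (\<forall>f. f \<in> L2 M \<and> integrable M f \<longrightarrow>
        fourier_L1 M f \<in> L2 N \<and>
        (\<integral>\<xi>. (cmod (fourier_L1 M f \<xi>))\<^sup>2 \<partial>N) = (\<integral>x. (cmod (f x))\<^sup>2 \<partial>M))"

definition fourier_L2 :: "'g measure \<Rightarrow> ('g \<Rightarrow> complex) measure \<Rightarrow> ('g \<Rightarrow> complex)
                          \<Rightarrow> ('g \<Rightarrow> complex) \<Rightarrow> complex" where
  "fourier_L2 M N f = (SOME g. g \<in> L2 N \<and>
     (\<exists>F. (\<forall>n. F n \<in> L2 M \<and> integrable M (F n)) \<and>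
          (\<lambda>n. \<integral>x. (cmod (F n x - f x))\<^sup>2 \<partial>M) \<longlonglongrightarrow> 0 \<and>
          (\<lambda>n. \<integral>\<xi>. (cmod (fourier_L1 M (F n) \<xi> - g \<xi>))\<^sup>2 \<partial>N) \<longlonglongrightarrow> 0))"

definition Gamma_class :: "(('g::topological_ab_group_add \<Rightarrow> complex) \<Rightarrow> real) \<Rightarrow> bool" where
  "Gamma_class \<gamma> \<longleftrightarrow> (\<forall>\<xi>\<in>dual_group. 0 \<le> \<gamma> \<xi>) \<and>
     (\<exists>c. \<forall>\<alpha>\<in>dual_group. \<forall>\<beta>\<in>dual_group. \<gamma> (\<lambda>x. \<alpha> x * \<beta> x) \<le> c * (\<gamma> \<alpha> + \<gamma> \<beta>))"

definition Hs_norm2 :: "'g measure \<Rightarrow> ('g \<Rightarrow> complex) measure \<Rightarrow> (('g \<Rightarrow> complex) \<Rightarrow> real)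
                        \<Rightarrow> real \<Rightarrow> ('g \<Rightarrow> complex) \<Rightarrow> ennreal" where
  "Hs_norm2 M N \<gamma> s f =
     (\<integral>\<^sup>+ \<xi>. ennreal ((1 + (\<gamma> \<xi>)\<^sup>2) powr s * (cmod (fourier_L2 M N f \<xi>))\<^sup>2) \<partial>N)"

definition Hs :: "'g measure \<Rightarrow> ('g \<Rightarrow> complex) measure \<Rightarrow> (('g \<Rightarrow> complex) \<Rightarrow> real)
                  \<Rightarrow> real \<Rightarrow> ('g \<Rightarrow> complex) set" where
  "Hs M N \<gamma> s = {f \<in> L2 M. Hs_norm2 M N \<gamma> s f < \<infinity>}"

end

theory Submission
  imports Defs
begin

text \<open>Translation by \<open>h\<close> multiplies Fourier transforms by \<open>\<xi> h\<close>, so by Plancherel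
  \<open>\<parallel>f(\<cdot> + h) - f\<parallel>\<^sup>2 \<le> \<integral> |\<xi> h - 1|\<^sup>2 |f\<^sup>\<and>(\<xi>)|\<^sup>2 \<le> C h \<parallel>f\<parallel>\<^sup>2\<^sub>H\<^sub>s\<close> with
  \<open>C h = sup\<^sub>\<xi> |\<xi> h - 1|\<^sup>2 / (1 + \<gamma>(\<xi>)\<^sup>2)\<^sup>s\<close>, and \<open>|\<xi> h - 1| \<le> 2\<close> gives
  \<open>C h \<le> 2 sup\<^sub>\<xi> |\<xi> h - 1| / (1 + \<gamma>(\<xi>)\<^sup>2)\<^sup>s \<rightarrow> 0\<close>.
  Since \<open>f\<^sup>\<and>\<close> is only defined as an \<open>L\<^sup>2\<close>-limit of transforms of \<open>L\<^sup>1 \<inter> L\<^sup>2\<close>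
  approximants of \<open>f\<close>, the first inequality is obtained by passing to the limit along such
  a sequence, whose existence rests on the density of \<open>L\<^sup>1 \<inter> L\<^sup>2\<close> and the
  completeness of \<open>L\<^sup>2\<close>.\<close>

lemma haar_measure_sets:
  assumes "haar_measure (\<mu>::'g::topological_ab_group_add measure)"
  shows "sets \<mu> = sets borel" and "space \<mu> = UNIV"
proof -
  have radon: "radon_on euclidean \<mu>" using assms by (simp add: haar_measure_def)
  then have "sets \<mu> = sigma_sets UNIV {U. open U}"
    by (simp add: radon_on_def borel_of_def)
  also have "\<dots> = sets borel" by (simp add: borel_def sets_measure_of)
  finally show "sets \<mu> = sets borel" .
  show "space \<mu> = UNIV" using radon by (simp add: radon_on_def)
qed

lemma measurable_haar_translate:
  fixes \<mu> :: "'g::topological_ab_group_add measure"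
  assumes "haar_measure \<mu>"
  shows "(\<lambda>x. x + h) \<in> measurable \<mu> \<mu>"
  using measurable_cong_sets[OF haar_measure_sets(1)[OF assms] haar_measure_sets(1)[OF assms]]
  by (simp add: continuous_on_add borel_measurable_continuous_onI)

lemma distr_haar_translate:
  fixes \<mu> :: "'g::topological_ab_group_add measure"
  assumes "haar_measure \<mu>"
  shows "distr \<mu> \<mu> (\<lambda>x. x + h) = \<mu>"
proof (rule measure_eqI)
  fix A assume "A \<in> sets (distr \<mu> \<mu> (\<lambda>x. x + h))"
  then have A: "A \<in> sets \<mu>" by simp
  have "(\<lambda>x. x + h) -` A \<inter> space \<mu> = (\<lambda>y. - h + y) ` A"
    using haar_measure_sets(2)[OF assms] by (force simp: image_iff algebra_simps)
  moreover have "emeasure \<mu> ((\<lambda>y. - h + y) ` A) = emeasure \<mu> A"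
    using assms A unfolding haar_measure_def by blast
  ultimately show "emeasure (distr \<mu> \<mu> (\<lambda>x. x + h)) A = emeasure \<mu> A"
    using A measurable_haar_translate[OF assms] by (simp add: emeasure_distr)
qed simp

lemma borel_measurable_haar_translate:
  fixes \<mu> :: "'g::topological_ab_group_add measure"
  assumes "haar_measure \<mu>" "g \<in> borel_measurable \<mu>"
  shows "(\<lambda>x. g (x + h)) \<in> borel_measurable \<mu>"
  using measurable_compose[OF measurable_haar_translate[OF assms(1)] assms(2)] by simp

lemma nn_integral_haar_translate:
  fixes \<mu> :: "'g::topological_ab_group_add measure"
  assumes "haar_measure \<mu>" "g \<in> borel_measurable \<mu>"
  shows "(\<integral>\<^sup>+x. g (x + h) \<partial>\<mu>) = integral\<^sup>N \<mu> g"
  using nn_integral_distr[OF measurable_haar_translate[OF assms(1)], of g]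
  by (simp add: assms distr_haar_translate)

lemma integrable_haar_translate_iff:
  fixes \<mu> :: "'g::topological_ab_group_add measure"
    and g :: "'g \<Rightarrow> 'b::{banach,second_countable_topology}"
  assumes "haar_measure \<mu>" "g \<in> borel_measurable \<mu>"
  shows "integrable \<mu> (\<lambda>x. g (x + h)) \<longleftrightarrow> integrable \<mu> g"
  using integrable_distr_eq[OF measurable_haar_translate[OF assms(1)] assms(2)]
  by (simp add: assms distr_haar_translate)

lemma integral_haar_translate:
  fixes \<mu> :: "'g::topological_ab_group_add measure"
    and g :: "'g \<Rightarrow> 'b::{banach,second_countable_topology}"
  assumes "haar_measure \<mu>" "g \<in> borel_measurable \<mu>"
  shows "(\<integral>x. g (x + h) \<partial>\<mu>) = integral\<^sup>L \<mu> g"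
  using integral_distr[OF measurable_haar_translate[OF assms(1)] assms(2)]
  by (simp add: assms distr_haar_translate)

lemma dual_groupD:
  assumes "\<xi> \<in> dual_group"
  shows "continuous_on UNIV \<xi>" and "cmod (\<xi> x) = 1" and "\<xi> (x + y) = \<xi> x * \<xi> y"
  using assms by (auto simp: dual_group_def)

lemma character_zero:
  assumes "\<xi> \<in> dual_group"
  shows "\<xi> 0 = 1"
proof -
  have "\<xi> 0 * \<xi> 0 = \<xi> 0 * 1" using dual_groupD(3)[OF assms, of 0 0] by simp
  moreover have "\<xi> 0 \<noteq> 0" using dual_groupD(2)[OF assms, of 0] by auto
  ultimately show ?thesis using mult_left_cancel by blast
qed

lemma character_minus:
  assumes "\<xi> \<in> dual_group"
  shows "\<xi> (- h) = cnj (\<xi> h)"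
proof -
  have "\<xi> h * \<xi> (- h) = 1"
    using dual_groupD(3)[OF assms, of h "- h"] character_zero[OF assms] by simp
  moreover have "\<xi> h * cnj (\<xi> h) = 1"
    using dual_groupD(2)[OF assms, of h] by (simp add: complex_norm_square[symmetric])
  ultimately show ?thesis by (metis mult.left_commute mult.right_neutral)
qed

lemma norm_character_sub_one_le:
  assumes "\<xi> \<in> dual_group"
  shows "cmod (\<xi> h - 1) \<le> 2"
  using norm_triangle_ineq4[of "\<xi> h" 1] dual_groupD(2)[OF assms, of h] by simp

lemma borel_measurable_character:
  assumes "haar_measure \<mu>" "\<xi> \<in> dual_group"
  shows "\<xi> \<in> borel_measurable \<mu>"
proof -
  have "\<xi> \<in> borel_measurable borel"
    using dual_groupD(1)[OF assms(2)] by (rule borel_measurable_continuous_onI)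
  moreover have "borel_measurable \<mu> = borel_measurable borel"
    by (rule measurable_cong_sets[OF haar_measure_sets(1)[OF assms(1)] refl])
  ultimately show ?thesis by blast
qed

lemma space_dual_haar_measure:
  assumes "dual_haar_measure \<nu>"
  shows "space \<nu> \<subseteq> dual_group"
  using assms unfolding dual_haar_measure_def radon_on_def dual_topology_def
  by auto

lemma borel_measurable_dual_eval:
  assumes "dual_haar_measure \<nu>"
  shows "(\<lambda>\<xi>. \<xi> h) \<in> borel_measurable \<nu>"
proof (rule borel_measurableI)
  fix V :: "complex set" assume "open V"
  define B where "B = {\<xi>\<in>dual_group. \<xi> ` {h} \<subseteq> V}"
  have radon: "radon_on dual_topology \<nu>" using assms by (simp add: dual_haar_measure_def)
  have "B \<in> {{\<xi>\<in>dual_group. \<xi> ` K \<subseteq> V} | K V. compact K \<and> open V}"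
    unfolding B_def using \<open>open V\<close> by (intro CollectI exI[of _ "{h}"] exI[of _ V]) auto
  then have "openin dual_topology B"
    unfolding dual_topology_def
    by (simp add: openin_topology_generated_by_iff generate_topology_on.Basis)
  then have "B \<in> sets \<nu>" "B \<subseteq> space \<nu>"
    using radon unfolding radon_on_def borel_of_def
    by (auto intro: sigma_sets.Basic simp: openin_subset)
  moreover have "(\<lambda>\<xi>. \<xi> h) -` V \<inter> space \<nu> = B \<inter> space \<nu>"
    using space_dual_haar_measure[OF assms] by (auto simp: B_def)
  ultimately show "(\<lambda>\<xi>. \<xi> h) -` V \<inter> space \<nu> \<in> sets \<nu>" by (simp add: Int_absorb2)
qed

lemma norm_sq_le_peter_paul:
  fixes a b :: "'a::real_normed_vector"
  assumes "d > 0"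
  shows "(norm a)\<^sup>2 \<le> (1 + d) * (norm b)\<^sup>2 + (1 + 1/d) * (norm (a - b))\<^sup>2"
proof -
  have "(norm a)\<^sup>2 \<le> (norm b + norm (a - b))\<^sup>2"
    using norm_triangle_sub[of a b] by (simp add: power_mono)
  also have "\<dots> = (norm b)\<^sup>2 + 2 * (norm b * norm (a - b)) + (norm (a - b))\<^sup>2"
    by (simp add: power2_sum)
  also have "2 * (norm b * norm (a - b)) \<le> d * (norm b)\<^sup>2 + (1/d) * (norm (a - b))\<^sup>2"
  proof -
    have "0 \<le> (sqrt d * norm b - norm (a - b) / sqrt d)\<^sup>2" by simp
    also have "\<dots> = d * (norm b)\<^sup>2 - 2 * (norm b * norm (a - b)) + (1/d) * (norm (a - b))\<^sup>2"
      using assms by (simp add: power2_diff power_divide field_simps real_sqrt_mult[symmetric])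
    finally show ?thesis by simp
  qed
  finally show ?thesis by (simp add: algebra_simps)
qed

definition L2_sqnorm :: "'a measure \<Rightarrow> ('a \<Rightarrow> complex) \<Rightarrow> ennreal" where
  "L2_sqnorm M u = (\<integral>\<^sup>+x. ennreal ((cmod (u x))\<^sup>2) \<partial>M)"

lemma L2_iff_sqnorm: "u \<in> L2 M \<longleftrightarrow> u \<in> borel_measurable M \<and> L2_sqnorm M u < \<infinity>"
  unfolding L2_def L2_sqnorm_def by (auto simp: integrable_iff_bounded)

lemma L2_sqnorm_eq_integral: "u \<in> L2 M \<Longrightarrow> L2_sqnorm M u = ennreal (\<integral>x. (cmod (u x))\<^sup>2 \<partial>M)"
  unfolding L2_sqnorm_def L2_def by (auto intro!: nn_integral_eq_integral)

lemma L2_sqnorm_le_combination: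
  assumes [measurable]: "v \<in> borel_measurable M" "w \<in> borel_measurable M"
    and "0 \<le> a" "0 \<le> b"
    and "\<And>x. x \<in> space M \<Longrightarrow> (cmod (u x))\<^sup>2 \<le> a * (cmod (v x))\<^sup>2 + b * (cmod (w x))\<^sup>2"
  shows "L2_sqnorm M u \<le> ennreal a * L2_sqnorm M v + ennreal b * L2_sqnorm M w"
proof -
  have "L2_sqnorm M u
      \<le> (\<integral>\<^sup>+x. ennreal a * ennreal ((cmod (v x))\<^sup>2) + ennreal b * ennreal ((cmod (w x))\<^sup>2) \<partial>M)"
    unfolding L2_sqnorm_def using assms(3-5)
    by (intro nn_integral_mono)
       (simp add: ennreal_mult[symmetric] ennreal_plus[symmetric] ennreal_leI del: ennreal_plus)
  also have "\<dots> = ennreal a * L2_sqnorm M v + ennreal b * L2_sqnorm M w"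
    unfolding L2_sqnorm_def by (simp add: nn_integral_add nn_integral_cmult)
  finally show ?thesis .
qed

lemma L2_sqnorm_peter_paul:
  assumes "d > 0" and [measurable]: "u \<in> borel_measurable M" "v \<in> borel_measurable M"
  shows "L2_sqnorm M u \<le> ennreal (1 + d) * L2_sqnorm M v + ennreal (1 + 1/d) * L2_sqnorm M (\<lambda>x. u x - v x)"
  using assms by (intro L2_sqnorm_le_combination norm_sq_le_peter_paul) auto

lemma L2_sqnorm_diff_le:
  assumes [measurable]: "u \<in> borel_measurable M" "v \<in> borel_measurable M"
  shows "L2_sqnorm M (\<lambda>x. u x - v x) \<le> 2 * L2_sqnorm M u + 2 * L2_sqnorm M v"
proof -
  have "(cmod (a - b))\<^sup>2 \<le> 2 * (cmod a)\<^sup>2 + 2 * (cmod b)\<^sup>2" for a b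
    using norm_sq_le_peter_paul[of 1 "a - b" "- b"] by simp
  then show ?thesis using L2_sqnorm_le_combination[where v=u and w=v and a=2 and b=2] by simp
qed

lemma L2_diff: "u \<in> L2 M \<Longrightarrow> v \<in> L2 M \<Longrightarrow> (\<lambda>x. u x - v x) \<in> L2 M"
  using L2_sqnorm_diff_le[of u M v] unfolding L2_iff_sqnorm
  by (auto simp: ennreal_mult_less_top order_le_less_trans)

lemma L2_sqnorm_minus_commute: "L2_sqnorm M (\<lambda>x. u x - v x) = L2_sqnorm M (\<lambda>x. v x - u x)"
  unfolding L2_sqnorm_def by (simp add: norm_minus_commute)

lemma L2_sqnorm_tendsto_zero_iff:
  assumes "\<And>n. u n \<in> L2 M"
  shows "(\<lambda>n. L2_sqnorm M (u n)) \<longlonglongrightarrow> 0 \<longleftrightarrow> (\<lambda>n. \<integral>x. (cmod (u n x))\<^sup>2 \<partial>M) \<longlonglongrightarrow> 0"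
  unfolding L2_sqnorm_eq_integral[OF assms] by (rule ennreal_tendsto_0_iff) simp

lemma tendsto_zero_ennrealI:
  fixes a :: "nat \<Rightarrow> ennreal"
  assumes "\<And>e. e > 0 \<Longrightarrow> \<exists>K. \<forall>n\<ge>K. a n \<le> ennreal e"
  shows "a \<longlonglongrightarrow> 0"
  unfolding order_tendsto_iff
proof (intro conjI allI impI)
  fix y :: ennreal assume "0 < y"
  then obtain z where z: "0 < z" "z < y" using dense[OF \<open>0 < y\<close>] by blast
  then obtain e where "z = ennreal e" "0 < e" by (cases z) auto
  then obtain K where K: "\<And>n. n \<ge> K \<Longrightarrow> a n \<le> z" using assms by blast
  show "\<forall>\<^sub>F n in sequentially. a n < y"
    unfolding eventually_sequentially using K z(2) by (blast intro: le_less_trans)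
qed simp

lemma tendsto_zero_ennreal_cmult_bound:
  fixes a b :: "nat \<Rightarrow> ennreal"
  assumes "\<And>n. a n \<le> c * b n" and "b \<longlonglongrightarrow> 0" and "c < \<infinity>"
  shows "a \<longlonglongrightarrow> 0"
proof (rule tendsto_sandwich[OF _ _ tendsto_const])
  show "(\<lambda>n. c * b n) \<longlonglongrightarrow> 0"
    using ennreal_tendsto_cmult[of c b 0 sequentially] assms(2,3) by simp
qed (use assms(1) in auto)

lemma L2_sqnorm_le_liminf:
  assumes [measurable]: "\<And>k. v k \<in> borel_measurable M"
    and lim: "AE x in M. (\<lambda>k. v k x) \<longlonglongrightarrow> w x"
  shows "L2_sqnorm M w \<le> liminf (\<lambda>k. L2_sqnorm M (v k))"
proof -
  have "L2_sqnorm M w = (\<integral>\<^sup>+x. liminf (\<lambda>k. ennreal ((cmod (v k x))\<^sup>2)) \<partial>M)"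
    unfolding L2_sqnorm_def
  proof (rule nn_integral_cong_AE)
    show "AE x in M. ennreal ((cmod (w x))\<^sup>2) = liminf (\<lambda>k. ennreal ((cmod (v k x))\<^sup>2))"
      using lim
    proof eventually_elim
      case (elim x)
      then have "(\<lambda>k. ennreal ((cmod (v k x))\<^sup>2)) \<longlonglongrightarrow> ennreal ((cmod (w x))\<^sup>2)"
        by (intro tendsto_intros)
      then show ?case by (metis lim_imp_Liminf trivial_limit_sequentially)
    qed
  qed
  also have "\<dots> \<le> liminf (\<lambda>k. L2_sqnorm M (v k))"
    unfolding L2_sqnorm_def by (rule nn_integral_liminf) measurable
  finally show ?thesis .
qed

lemma le_four_pow_sq_add: "t \<le> (4 ^ k * t\<^sup>2 + (1/4) ^ k) / 2"
  for t :: real and k :: nat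
proof -
  have "0 \<le> (2 ^ k * t - (1/2) ^ k)\<^sup>2" by simp
  also have "\<dots> = 4 ^ k * t\<^sup>2 - 2 * t * (2 ^ k * (1/2) ^ k) + (1/4) ^ k"
    by (simp add: power2_diff power_mult_distrib power_mult[symmetric] mult_ac power_divide)
       (simp add: power_mult power2_eq_square power_mult_distrib[symmetric])
  also have "2 ^ k * (1/2::real) ^ k = 1" by (simp add: power_mult_distrib[symmetric])
  finally show ?thesis by simp
qed

text \<open>The function \<open>\<Sum>k. 4\<^sup>k |u (k+1) - u k|\<^sup>2\<close> has finite integral, hence is finite a.e.,
  and where it is finite, \<open>|u (k+1) - u k| \<le> (4\<^sup>k |u (k+1) - u k|\<^sup>2 + 4\<^sup>-\<^sup>k) / 2\<close> is summable.\<close>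
lemma AE_convergent_of_L2_fast_Cauchy:
  assumes [measurable]: "\<And>k. u k \<in> borel_measurable M"
    and fast: "\<And>k. L2_sqnorm M (\<lambda>x. u (Suc k) x - u k x) \<le> ennreal ((1/8) ^ k)"
  shows "AE x in M. convergent (\<lambda>k. u k x)"
proof -
  define d where "d k = (\<lambda>x. u (Suc k) x - u k x)" for k
  have [measurable]: "d k \<in> borel_measurable M" for k unfolding d_def by measurable
  define S where "S x = (\<Sum>k. ennreal (4 ^ k * (cmod (d k x))\<^sup>2))" for x
  have "(\<integral>\<^sup>+x. S x \<partial>M) = (\<Sum>k. \<integral>\<^sup>+x. ennreal (4 ^ k * (cmod (d k x))\<^sup>2) \<partial>M)"
    unfolding S_def by (rule nn_integral_suminf) measurable
  also have "\<dots> = (\<Sum>k. ennreal (4 ^ k) * L2_sqnorm M (d k))"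
    unfolding L2_sqnorm_def by (simp add: ennreal_mult nn_integral_cmult)
  also have "\<dots> \<le> (\<Sum>k. ennreal ((1/2) ^ k))"
  proof (intro suminf_le allI)
    fix k
    have "ennreal (4 ^ k) * L2_sqnorm M (d k) \<le> ennreal (4 ^ k) * ennreal ((1/8) ^ k)"
      using fast[of k] by (intro mult_left_mono) (auto simp: d_def)
    also have "\<dots> = ennreal ((1/2) ^ k)"
      by (simp add: ennreal_mult[symmetric] power_mult_distrib[symmetric])
    finally show "ennreal (4 ^ k) * L2_sqnorm M (d k) \<le> ennreal ((1/2) ^ k)" .
  qed auto
  also have "\<dots> = ennreal (\<Sum>k. (1/2) ^ k)"
    by (rule suminf_ennreal2) auto
  also have "\<dots> < \<infinity>" by simp
  finally have "AE x in M. S x < \<infinity>"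
    by (intro finite_nn_integral_imp_ae_finite) (auto simp: S_def)
  then show ?thesis
  proof eventually_elim
    case (elim x)
    have "summable (\<lambda>k. 4 ^ k * (cmod (d k x))\<^sup>2)"
      using elim unfolding S_def by (intro summable_suminf_not_top) auto
    then have "summable (\<lambda>k. (4 ^ k * (cmod (d k x))\<^sup>2 + (1/4) ^ k) / 2)"
      by (intro summable_divide summable_add) auto
    then have "summable (\<lambda>k. norm (d k x))"
      by (rule summable_comparison_test'[where N=0]) (use le_four_pow_sq_add[of "cmod (d _ x)"] in simp)
    then have "(\<lambda>n. \<Sum>k<n. d k x) \<longlonglongrightarrow> (\<Sum>k. d k x)"
      by (rule summable_LIMSEQ[OF summable_norm_cancel])
    moreover have "(\<lambda>n. \<Sum>k<n. d k x) = (\<lambda>n. u n x - u 0 x)"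
      unfolding d_def using sum_lessThan_telescope[of "\<lambda>k. u k x"] by simp
    ultimately have "(\<lambda>n. u n x - u 0 x + u 0 x) \<longlonglongrightarrow> (\<Sum>k. d k x) + u 0 x"
      by (intro tendsto_add) simp_all
    then show ?case by (auto simp: convergent_def)
  qed
qed

lemma L2_Cauchy_of_tendsto:
  assumes [measurable]: "\<And>n. u n \<in> borel_measurable M" "f \<in> borel_measurable M"
    and lim: "(\<lambda>n. L2_sqnorm M (\<lambda>x. u n x - f x)) \<longlonglongrightarrow> 0" and "e > 0"
  shows "\<exists>K. \<forall>m\<ge>K. \<forall>n\<ge>K. L2_sqnorm M (\<lambda>x. u m x - u n x) \<le> ennreal e"
proof -
  have "\<forall>\<^sub>F n in sequentially. L2_sqnorm M (\<lambda>x. u n x - f x) < ennreal (e / 4)"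
    using lim \<open>e > 0\<close> by (simp add: order_tendsto_iff)
  then obtain K where K: "\<And>n. n \<ge> K \<Longrightarrow> L2_sqnorm M (\<lambda>x. u n x - f x) \<le> ennreal (e / 4)"
    unfolding eventually_sequentially by (auto intro: less_imp_le)
  have "L2_sqnorm M (\<lambda>x. u m x - u n x) \<le> ennreal e" if "m \<ge> K" "n \<ge> K" for m n
  proof -
    have "L2_sqnorm M (\<lambda>x. u m x - u n x) = L2_sqnorm M (\<lambda>x. (u m x - f x) - (u n x - f x))"
      by simp
    also have "\<dots> \<le> 2 * L2_sqnorm M (\<lambda>x. u m x - f x) + 2 * L2_sqnorm M (\<lambda>x. u n x - f x)"
      by (rule L2_sqnorm_diff_le) measurable
    also have "\<dots> \<le> 2 * ennreal (e / 4) + 2 * ennreal (e / 4)"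
      using K that by (intro add_mono mult_left_mono) auto
    also have "\<dots> = ennreal e"
      using \<open>e > 0\<close> by (simp flip: ennreal_plus ennreal_numeral ennreal_mult add: ennreal_mult'')
    finally show ?thesis .
  qed
  then show ?thesis by blast
qed

lemma L2_complete:
  assumes L2: "\<And>n. u n \<in> L2 M"
    and Cauchy: "\<And>e. e > 0 \<Longrightarrow> \<exists>K. \<forall>m\<ge>K. \<forall>n\<ge>K. L2_sqnorm M (\<lambda>x. u m x - u n x) \<le> ennreal e"
  obtains g where "g \<in> L2 M" and "(\<lambda>n. L2_sqnorm M (\<lambda>x. u n x - g x)) \<longlonglongrightarrow> 0"
proof -
  have [measurable]: "u n \<in> borel_measurable M" for n using L2 by (simp add: L2_def)
  obtain K where K: "\<And>e m n. e > 0 \<Longrightarrow> m \<ge> K e \<Longrightarrow> n \<ge> K e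
      \<Longrightarrow> L2_sqnorm M (\<lambda>x. u m x - u n x) \<le> ennreal e"
    using Cauchy by metis
  define r where "r = rec_nat (K 1) (\<lambda>k rk. max (Suc rk) (K ((1/8) ^ Suc k)))"
  have r_ge: "K ((1/8) ^ k) \<le> r k" for k by (cases k) (auto simp: r_def)
  have r_Suc: "r k < r (Suc k)" for k by (simp add: r_def)
  then have "strict_mono r" by (simp add: strict_mono_Suc_iff)
  have "AE x in M. convergent (\<lambda>k. u (r k) x)"
  proof (rule AE_convergent_of_L2_fast_Cauchy)
    show "L2_sqnorm M (\<lambda>x. u (r (Suc k)) x - u (r k) x) \<le> ennreal ((1/8) ^ k)" for k
      using K[of "(1/8) ^ k" "r (Suc k)" "r k"] r_ge[of k] r_Suc[of k] by simp
  qed measurable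
  then have g_lim: "AE x in M. (\<lambda>k. u (r k) x) \<longlonglongrightarrow> lim (\<lambda>k. u (r k) x)"
    by eventually_elim (simp add: convergent_LIMSEQ_iff)
  define g where "g x = lim (\<lambda>k. u (r k) x)" for x
  have [measurable]: "g \<in> borel_measurable M" unfolding g_def by measurable
  have close: "L2_sqnorm M (\<lambda>x. u n x - g x) \<le> ennreal e" if "e > 0" "n \<ge> K e" for n e
  proof -
    have "L2_sqnorm M (\<lambda>x. u n x - g x) \<le> liminf (\<lambda>k. L2_sqnorm M (\<lambda>x. u n x - u (r k) x))"
      using g_lim unfolding g_def[symmetric]
      by (intro L2_sqnorm_le_liminf) (auto elim!: eventually_mono intro: tendsto_diff)
    also have "\<dots> \<le> liminf (\<lambda>k. ennreal e)"
    proof (rule Liminf_mono)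
      show "\<forall>\<^sub>F k in sequentially. L2_sqnorm M (\<lambda>x. u n x - u (r k) x) \<le> ennreal e"
        using eventually_ge_at_top[of "K e"]
      proof eventually_elim
        case (elim k)
        then show ?case using K[OF that, of "r k"] seq_suble[OF \<open>strict_mono r\<close>, of k] by simp
      qed
    qed
    finally show ?thesis by (simp add: Liminf_const)
  qed
  have "(\<lambda>x. u (K 1) x - g x) \<in> L2 M"
    using close[of 1 "K 1"] unfolding L2_iff_sqnorm by (simp add: order_le_less_trans)
  from L2_diff[OF L2[of "K 1"] this] have "g \<in> L2 M" by simp
  moreover have "(\<lambda>n. L2_sqnorm M (\<lambda>x. u n x - g x)) \<longlonglongrightarrow> 0"
    using close by (intro tendsto_zero_ennrealI) blast
  ultimately show ?thesis by (rule that)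
qed

lemma L2_integrable_dense:
  assumes "f \<in> L2 M"
  obtains F where "\<And>n. F n \<in> L2 M" and "\<And>n. integrable M (F n)"
    and "(\<lambda>n. \<integral>x. (cmod (F n x - f x))\<^sup>2 \<partial>M) \<longlonglongrightarrow> 0"
proof -
  have [measurable]: "f \<in> borel_measurable M" and f2: "integrable M (\<lambda>x. (cmod (f x))\<^sup>2)"
    using assms by (auto simp: L2_def)
  text \<open>Cutting off the small values makes \<open>f\<close> integrable, as \<open>|f| \<le> (n + 1) |f|\<^sup>2\<close> where
    \<open>|f| \<ge> 1 / (n + 1)\<close>.\<close>
  define F where "F n x = (if inverse (Suc n) \<le> cmod (f x) then f x else 0)" for n x
  have [measurable]: "F n \<in> borel_measurable M" for n unfolding F_def by measurable
  have "F n \<in> L2 M" for n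
  proof -
    have "L2_sqnorm M (F n) \<le> L2_sqnorm M f"
      unfolding L2_sqnorm_def F_def by (intro nn_integral_mono) auto
    then show ?thesis using assms unfolding L2_iff_sqnorm by (auto intro: order_le_less_trans)
  qed
  moreover have "integrable M (F n)" for n
  proof (rule Bochner_Integration.integrable_bound)
    show "integrable M (\<lambda>x. Suc n * (cmod (f x))\<^sup>2)" using f2 by simp
    have "norm (F n x) \<le> norm (Suc n * (cmod (f x))\<^sup>2)" for x
    proof (cases "inverse (Suc n) \<le> cmod (f x)")
      case True
      then have "cmod (f x) * 1 \<le> cmod (f x) * (Suc n * cmod (f x))"
        by (intro mult_left_mono) (auto simp: field_simps)
      with True show ?thesis by (simp add: F_def power2_eq_square mult_ac)
    qed (simp add: F_def)
    then show "AE x in M. norm (F n x) \<le> norm (Suc n * (cmod (f x))\<^sup>2)" by simp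
  qed simp
  moreover have "(\<lambda>n. \<integral>x. (cmod (F n x - f x))\<^sup>2 \<partial>M) \<longlonglongrightarrow> 0"
  proof -
    have "(\<lambda>n. (cmod (F n x - f x))\<^sup>2) \<longlonglongrightarrow> 0" for x
    proof (cases "f x = 0")
      case False
      then obtain N where N: "inverse (Suc N) < cmod (f x)"
        using reals_Archimedean[of "cmod (f x)"] by auto
      have eq: "F n x = f x" if "N \<le> n" for n
      proof -
        have "inverse (Suc n) \<le> inverse (Suc N)" using that by (simp add: le_imp_inverse_le)
        with N have "inverse (Suc n) \<le> cmod (f x)" by linarith
        then show ?thesis by (simp add: F_def)
      qed
      have "\<forall>\<^sub>F n in sequentially. (cmod (F n x - f x))\<^sup>2 = 0"
        using eventually_ge_at_top[of N] by (rule eventually_mono) (simp add: eq)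
      then show ?thesis by (rule tendsto_eventually)
    qed (simp add: F_def)
    then have "(\<lambda>n. \<integral>x. (cmod (F n x - f x))\<^sup>2 \<partial>M) \<longlonglongrightarrow> (\<integral>x. 0 \<partial>M)"
      by (intro integral_dominated_convergence[where w="\<lambda>x. (cmod (f x))\<^sup>2"] f2 AE_I2)
         (simp_all add: F_def)
    then show ?thesis by simp
  qed
  ultimately show ?thesis using that[of F] by simp
qed

text \<open>Unlike \<open>nn_integral_cmult\<close>, this needs no measurability of \<open>f\<close>; the Sobolev weight
  \<open>(1 + \<gamma>(\<xi>)\<^sup>2)\<^sup>s\<close> is not known to be measurable.\<close>
lemma nn_integral_cmult_le:
  fixes c :: ennreal
  assumes "c < \<infinity>"
  shows "(\<integral>\<^sup>+x. c * f x \<partial>M) \<le> c * integral\<^sup>N M f"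
proof (cases "c = 0")
  case False
  have c_cancel: "c * (inverse c * y) = y" for y
  proof -
    obtain r where "c = ennreal r" "0 < r" using assms False by (cases c) auto
    then show ?thesis by (simp add: mult.assoc[symmetric] inverse_ennreal ennreal_mult[symmetric])
  qed
  show ?thesis
    unfolding nn_integral_def
  proof (rule SUP_least)
    fix g assume g: "g \<in> {g. simple_function M g \<and> g \<le> (\<lambda>x. c * f x)}"
    define g' where "g' x = inverse c * g x" for x
    have "simple_function M g'" using g unfolding g'_def by auto
    moreover have "g' \<le> f"
    proof (rule le_funI)
      fix x
      have "inverse c * g x \<le> inverse c * (c * f x)"
        using g by (intro mult_left_mono) (auto simp: le_fun_def)
      then show "g' x \<le> f x" by (metis c_cancel g'_def mult.left_commute)
    qed
    ultimately have "c * integral\<^sup>S M g' \<le> c * (SUP g \<in> {g. simple_function M g \<and> g \<le> f}. integral\<^sup>S M g)"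
      by (intro mult_left_mono SUP_upper) auto
    moreover have "g = (\<lambda>x. c * g' x)" by (simp add: g'_def c_cancel)
    ultimately show "integral\<^sup>S M g \<le> c * (SUP g \<in> {g. simple_function M g \<and> g \<le> f}. integral\<^sup>S M g)"
      using \<open>simple_function M g'\<close> by simp
  qed
qed simp

lemma translate_L2:
  fixes \<mu> :: "'g::topological_ab_group_add measure"
  assumes \<mu>: "haar_measure \<mu>" and u: "u \<in> L2 \<mu>"
  shows "(\<lambda>x. u (x + h)) \<in> L2 \<mu>" and "L2_sqnorm \<mu> (\<lambda>x. u (x + h)) = L2_sqnorm \<mu> u"
proof -
  have u_meas [measurable]: "u \<in> borel_measurable \<mu>" using u by (simp add: L2_def)
  show eq: "L2_sqnorm \<mu> (\<lambda>x. u (x + h)) = L2_sqnorm \<mu> u"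
    unfolding L2_sqnorm_def by (rule nn_integral_haar_translate[OF \<mu>]) measurable
  show "(\<lambda>x. u (x + h)) \<in> L2 \<mu>"
    using eq u borel_measurable_haar_translate[OF \<mu> u_meas] unfolding L2_iff_sqnorm by simp
qed

lemma L2_sqnorm_translate_diff_le:
  fixes \<mu> :: "'g::topological_ab_group_add measure"
  assumes \<mu>: "haar_measure \<mu>" and u: "u \<in> L2 \<mu>"
  shows "L2_sqnorm \<mu> (\<lambda>x. u (x + h) - u x) \<le> 4 * L2_sqnorm \<mu> u"
proof -
  have u_meas: "u \<in> borel_measurable \<mu>" using u by (simp add: L2_def)
  have "L2_sqnorm \<mu> (\<lambda>x. u (x + h) - u x) \<le> 2 * L2_sqnorm \<mu> (\<lambda>x. u (x + h)) + 2 * L2_sqnorm \<mu> u"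
    by (rule L2_sqnorm_diff_le[OF borel_measurable_haar_translate[OF \<mu> u_meas] u_meas])
  also have "\<dots> = 4 * L2_sqnorm \<mu> u"
    using translate_L2(2)[OF \<mu> u] by (simp flip: distrib_right)
  finally show ?thesis .
qed

lemma borel_measurable_cnj [measurable]:
  "f \<in> borel_measurable M \<Longrightarrow> (\<lambda>x. cnj (f x)) \<in> borel_measurable M"
  by (rule borel_measurable_continuous_on[where f=cnj]) (auto intro: continuous_intros)

lemma integrable_character_mult:
  assumes "haar_measure \<mu>" "\<xi> \<in> dual_group" "integrable \<mu> F"
  shows "integrable \<mu> (\<lambda>x. cnj (\<xi> x) * F x)"
proof (rule Bochner_Integration.integrable_bound[OF assms(3)])
  have [measurable]: "\<xi> \<in> borel_measurable \<mu>" "F \<in> borel_measurable \<mu>"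
    using borel_measurable_character[OF assms(1,2)] assms(3) by auto
  show "(\<lambda>x. cnj (\<xi> x) * F x) \<in> borel_measurable \<mu>" by measurable
  show "AE x in \<mu>. norm (cnj (\<xi> x) * F x) \<le> norm (F x)"
    using dual_groupD(2)[OF assms(2)] by (simp add: norm_mult)
qed

lemma fourier_L1_diff:
  assumes "haar_measure \<mu>" "\<xi> \<in> dual_group" "integrable \<mu> F" "integrable \<mu> G"
  shows "fourier_L1 \<mu> (\<lambda>x. F x - G x) \<xi> = fourier_L1 \<mu> F \<xi> - fourier_L1 \<mu> G \<xi>"
  unfolding fourier_L1_def right_diff_distrib
  using assms by (intro Bochner_Integration.integral_diff integrable_character_mult)

lemma fourier_L1_translate_diff:
  fixes \<mu> :: "'g::topological_ab_group_add measure"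
  assumes \<mu>: "haar_measure \<mu>" and \<xi>: "\<xi> \<in> dual_group" and F: "integrable \<mu> F"
  shows "fourier_L1 \<mu> (\<lambda>x. F (x + h) - F x) \<xi> = (\<xi> h - 1) * fourier_L1 \<mu> F \<xi>"
proof -
  have [measurable]: "F \<in> borel_measurable \<mu>" "\<xi> \<in> borel_measurable \<mu>"
    using F borel_measurable_character[OF \<mu> \<xi>] by auto
  have [measurable]: "(\<lambda>x. \<xi> (x + - h)) \<in> borel_measurable \<mu>"
    using borel_measurable_haar_translate[OF \<mu>, of \<xi> "- h"] by simp
  define G where "G y = cnj (\<xi> (y + - h)) * F y" for y
  have G_eq: "G y = \<xi> h * (cnj (\<xi> y) * F y)" for y
    unfolding G_def dual_groupD(3)[OF \<xi>] character_minus[OF \<xi>] by simp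
  have "fourier_L1 \<mu> (\<lambda>x. F (x + h)) \<xi> = (\<integral>x. G (x + h) \<partial>\<mu>)"
    unfolding fourier_L1_def G_def by (simp add: add.assoc)
  also have "\<dots> = integral\<^sup>L \<mu> G"
    by (rule integral_haar_translate[OF \<mu>]) (unfold G_def, measurable)
  also have "\<dots> = \<xi> h * fourier_L1 \<mu> F \<xi>"
    unfolding G_eq fourier_L1_def by simp
  finally have "fourier_L1 \<mu> (\<lambda>x. F (x + h)) \<xi> = \<xi> h * fourier_L1 \<mu> F \<xi>" .
  moreover have "integrable \<mu> (\<lambda>x. F (x + h))"
    using integrable_haar_translate_iff[OF \<mu>, of F h] F by simp
  ultimately show ?thesis
    using fourier_L1_diff[OF \<mu> \<xi> _ F, of "\<lambda>x. F (x + h)"] by (simp add: algebra_simps)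
qed

lemma plancherel_L2_sqnorm:
  assumes "plancherel_normalized \<mu> \<nu>" "F \<in> L2 \<mu>" "integrable \<mu> F"
  shows "fourier_L1 \<mu> F \<in> L2 \<nu>" and "L2_sqnorm \<nu> (fourier_L1 \<mu> F) = L2_sqnorm \<mu> F"
proof -
  show F_hat: "fourier_L1 \<mu> F \<in> L2 \<nu>" using assms unfolding plancherel_normalized_def by blast
  have "(\<integral>\<xi>. (cmod (fourier_L1 \<mu> F \<xi>))\<^sup>2 \<partial>\<nu>) = (\<integral>x. (cmod (F x))\<^sup>2 \<partial>\<mu>)"
    using assms unfolding plancherel_normalized_def by blast
  then show "L2_sqnorm \<nu> (fourier_L1 \<mu> F) = L2_sqnorm \<mu> F"
    using L2_sqnorm_eq_integral[OF F_hat] L2_sqnorm_eq_integral[OF assms(2)] by simp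
qed

lemma L2_sqnorm_fourier_L1_diff:
  assumes \<mu>: "haar_measure \<mu>" and \<nu>: "dual_haar_measure \<nu>" and pl: "plancherel_normalized \<mu> \<nu>"
    and F: "F \<in> L2 \<mu>" "integrable \<mu> F" and G: "G \<in> L2 \<mu>" "integrable \<mu> G"
  shows "L2_sqnorm \<nu> (\<lambda>\<xi>. fourier_L1 \<mu> F \<xi> - fourier_L1 \<mu> G \<xi>) = L2_sqnorm \<mu> (\<lambda>x. F x - G x)"
proof -
  have "L2_sqnorm \<nu> (\<lambda>\<xi>. fourier_L1 \<mu> F \<xi> - fourier_L1 \<mu> G \<xi>)
      = L2_sqnorm \<nu> (fourier_L1 \<mu> (\<lambda>x. F x - G x))"
    unfolding L2_sqnorm_def using space_dual_haar_measure[OF \<nu>]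
    by (intro nn_integral_cong) (auto simp: fourier_L1_diff[OF \<mu> _ F(2) G(2)])
  also have "\<dots> = L2_sqnorm \<mu> (\<lambda>x. F x - G x)"
    using F G by (intro plancherel_L2_sqnorm(2)[OF pl] L2_diff) auto
  finally show ?thesis .
qed

lemma fourier_L1_tendsto_L2:
  assumes \<mu>: "haar_measure \<mu>" and \<nu>: "dual_haar_measure \<nu>" and pl: "plancherel_normalized \<mu> \<nu>"
    and F: "\<And>n. F n \<in> L2 \<mu>" "\<And>n. integrable \<mu> (F n)" and f: "f \<in> L2 \<mu>"
    and lim: "(\<lambda>n. L2_sqnorm \<mu> (\<lambda>x. F n x - f x)) \<longlonglongrightarrow> 0"
  obtains g where "g \<in> L2 \<nu>" and "(\<lambda>n. L2_sqnorm \<nu> (\<lambda>\<xi>. fourier_L1 \<mu> (F n) \<xi> - g \<xi>)) \<longlonglongrightarrow> 0"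
proof -
  have [measurable]: "f \<in> borel_measurable \<mu>" "F n \<in> borel_measurable \<mu>" for n
    using f F(1) by (auto simp: L2_def)
  have "\<exists>K. \<forall>m\<ge>K. \<forall>n\<ge>K. L2_sqnorm \<nu> (\<lambda>\<xi>. fourier_L1 \<mu> (F m) \<xi> - fourier_L1 \<mu> (F n) \<xi>) \<le> ennreal e"
    if "e > 0" for e
    unfolding L2_sqnorm_fourier_L1_diff[OF \<mu> \<nu> pl F F]
    by (rule L2_Cauchy_of_tendsto[OF _ _ lim that]) measurable
  then obtain g where "g \<in> L2 \<nu>" "(\<lambda>n. L2_sqnorm \<nu> (\<lambda>\<xi>. fourier_L1 \<mu> (F n) \<xi> - g \<xi>)) \<longlonglongrightarrow> 0"
    using L2_complete[where u="\<lambda>n. fourier_L1 \<mu> (F n)", OF plancherel_L2_sqnorm(1)[OF pl F]]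
    by blast
  then show ?thesis by (rule that)
qed

lemma fourier_L2_approximation:
  assumes \<mu>: "haar_measure \<mu>" and \<nu>: "dual_haar_measure \<nu>" and pl: "plancherel_normalized \<mu> \<nu>"
    and f: "f \<in> L2 \<mu>"
  obtains F where "\<And>n. F n \<in> L2 \<mu>" and "\<And>n. integrable \<mu> (F n)"
    and "fourier_L2 \<mu> \<nu> f \<in> L2 \<nu>"
    and "(\<lambda>n. L2_sqnorm \<mu> (\<lambda>x. F n x - f x)) \<longlonglongrightarrow> 0"
    and "(\<lambda>n. L2_sqnorm \<nu> (\<lambda>\<xi>. fourier_L1 \<mu> (F n) \<xi> - fourier_L2 \<mu> \<nu> f \<xi>)) \<longlonglongrightarrow> 0"
proof -
  define P where "P g \<longleftrightarrow> g \<in> L2 \<nu> \<and>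
     (\<exists>F. (\<forall>n. F n \<in> L2 \<mu> \<and> integrable \<mu> (F n)) \<and>
          (\<lambda>n. \<integral>x. (cmod (F n x - f x))\<^sup>2 \<partial>\<mu>) \<longlonglongrightarrow> 0 \<and>
          (\<lambda>n. \<integral>\<xi>. (cmod (fourier_L1 \<mu> (F n) \<xi> - g \<xi>))\<^sup>2 \<partial>\<nu>) \<longlonglongrightarrow> 0)" for g
  have "\<exists>g. P g"
  proof -
    obtain F where F: "\<And>n. F n \<in> L2 \<mu>" "\<And>n. integrable \<mu> (F n)"
      and F_lim: "(\<lambda>n. \<integral>x. (cmod (F n x - f x))\<^sup>2 \<partial>\<mu>) \<longlonglongrightarrow> 0"
      using L2_integrable_dense[OF f] by blast
    then have "(\<lambda>n. L2_sqnorm \<mu> (\<lambda>x. F n x - f x)) \<longlonglongrightarrow> 0"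
      using L2_diff[OF F(1) f] by (simp add: L2_sqnorm_tendsto_zero_iff)
    then obtain g where g: "g \<in> L2 \<nu>"
      and "(\<lambda>n. L2_sqnorm \<nu> (\<lambda>\<xi>. fourier_L1 \<mu> (F n) \<xi> - g \<xi>)) \<longlonglongrightarrow> 0"
      using fourier_L1_tendsto_L2[where F=F, OF \<mu> \<nu> pl F f] by blast
    then have "(\<lambda>n. \<integral>\<xi>. (cmod (fourier_L1 \<mu> (F n) \<xi> - g \<xi>))\<^sup>2 \<partial>\<nu>) \<longlonglongrightarrow> 0"
      using L2_diff[OF plancherel_L2_sqnorm(1)[OF pl F] g] by (simp add: L2_sqnorm_tendsto_zero_iff)
    then show ?thesis unfolding P_def using g F F_lim by blast
  qed
  moreover have "fourier_L2 \<mu> \<nu> f = (SOME g. P g)" unfolding fourier_L2_def P_def ..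
  ultimately have "P (fourier_L2 \<mu> \<nu> f)" by (simp add: someI_ex)
  then obtain F where F: "\<And>n. F n \<in> L2 \<mu>" "\<And>n. integrable \<mu> (F n)"
    and f_hat: "fourier_L2 \<mu> \<nu> f \<in> L2 \<nu>"
    and lim1: "(\<lambda>n. \<integral>x. (cmod (F n x - f x))\<^sup>2 \<partial>\<mu>) \<longlonglongrightarrow> 0"
    and lim2: "(\<lambda>n. \<integral>\<xi>. (cmod (fourier_L1 \<mu> (F n) \<xi> - fourier_L2 \<mu> \<nu> f \<xi>))\<^sup>2 \<partial>\<nu>) \<longlonglongrightarrow> 0"
    unfolding P_def by blast
  show ?thesis
  proof (rule that[OF F f_hat])
    show "(\<lambda>n. L2_sqnorm \<mu> (\<lambda>x. F n x - f x)) \<longlonglongrightarrow> 0"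
      using lim1 L2_diff[OF F(1) f] by (simp add: L2_sqnorm_tendsto_zero_iff)
    show "(\<lambda>n. L2_sqnorm \<nu> (\<lambda>\<xi>. fourier_L1 \<mu> (F n) \<xi> - fourier_L2 \<mu> \<nu> f \<xi>)) \<longlonglongrightarrow> 0"
      using lim2 L2_diff[OF plancherel_L2_sqnorm(1)[OF pl F(1,2)] f_hat]
      by (simp add: L2_sqnorm_tendsto_zero_iff)
  qed
qed

text \<open>In place of the triangle inequality for \<open>L\<^sup>2\<close>-norms, the Peter--Paul bound
  \<open>|a|\<^sup>2 \<le> (1 + d) |b|\<^sup>2 + (1 + 1/d) |a - b|\<^sup>2\<close> is used twice and \<open>d \<rightarrow> 0\<close> at the end.\<close>
lemma L2_sqnorm_le_of_approx:
  assumes [measurable]: "u \<in> borel_measurable M" "w \<in> borel_measurable N"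
    "\<And>n. v n \<in> borel_measurable M" "\<And>n. z n \<in> borel_measurable N"
    and eq: "\<And>n. L2_sqnorm M (v n) = L2_sqnorm N (z n)"
    and v_lim: "(\<lambda>n. L2_sqnorm M (\<lambda>x. u x - v n x)) \<longlonglongrightarrow> 0"
    and z_lim: "(\<lambda>n. L2_sqnorm N (\<lambda>x. z n x - w x)) \<longlonglongrightarrow> 0"
  shows "L2_sqnorm M u \<le> L2_sqnorm N w"
proof -
  have bound: "L2_sqnorm M u \<le> ennreal ((1 + d)\<^sup>2 * y)"
    if "d > 0" "L2_sqnorm N w = ennreal y" "0 \<le> y" for d y
  proof (rule LIMSEQ_le_const)
    define a b where "a = ennreal (1 + d)" and "b = ennreal (1 + 1/d)"
    let ?B = "\<lambda>n. a * (a * L2_sqnorm N w + b * L2_sqnorm N (\<lambda>x. z n x - w x))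
                  + b * L2_sqnorm M (\<lambda>x. u x - v n x)"
    have "?B \<longlonglongrightarrow> a * (a * L2_sqnorm N w + b * 0) + b * 0"
      unfolding a_def b_def
      by (intro tendsto_add ennreal_tendsto_cmult tendsto_const v_lim z_lim) auto
    then show "?B \<longlonglongrightarrow> ennreal ((1 + d)\<^sup>2 * y)"
      using that by (simp add: a_def ennreal_mult' power2_eq_square mult.assoc)
    show "\<exists>N. \<forall>n\<ge>N. L2_sqnorm M u \<le> ?B n"
    proof (intro exI allI impI)
      fix n
      have "L2_sqnorm M u \<le> a * L2_sqnorm N (z n) + b * L2_sqnorm M (\<lambda>x. u x - v n x)"
        unfolding a_def b_def eq[symmetric] by (rule L2_sqnorm_peter_paul) (use that in auto)
      also have "\<dots> \<le> ?B n"
        unfolding a_def b_def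
        by (intro add_mono mult_left_mono L2_sqnorm_peter_paul) (use that in auto)
      finally show "L2_sqnorm M u \<le> ?B n" .
    qed
  qed
  show ?thesis
  proof (cases "L2_sqnorm N w")
    case (real y)
    have "((\<lambda>d. ennreal ((1 + d)\<^sup>2 * y)) \<longlongrightarrow> ennreal ((1 + 0)\<^sup>2 * y)) (at_right 0)"
      by (intro tendsto_ennrealI tendsto_intros)
    moreover have "\<forall>\<^sub>F d in at_right 0. L2_sqnorm M u \<le> ennreal ((1 + d)\<^sup>2 * y)"
      using real by (intro eventually_at_rightI[of 0 1]) (auto intro: bound)
    ultimately have "L2_sqnorm M u \<le> ennreal ((1 + 0)\<^sup>2 * y)"
      by (rule tendsto_lowerbound) simp
    with real show ?thesis by simp
  qed simp
qed

lemma L2_sqnorm_translate_diff_eq_fourier: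
  fixes \<mu> :: "'g::topological_ab_group_add measure"
  assumes \<mu>: "haar_measure \<mu>" and \<nu>: "dual_haar_measure \<nu>" and pl: "plancherel_normalized \<mu> \<nu>"
    and F: "F \<in> L2 \<mu>" "integrable \<mu> F"
  shows "L2_sqnorm \<mu> (\<lambda>x. F (x + h) - F x) = L2_sqnorm \<nu> (\<lambda>\<xi>. (\<xi> h - 1) * fourier_L1 \<mu> F \<xi>)"
proof -
  have "integrable \<mu> (\<lambda>x. F (x + h))"
    using integrable_haar_translate_iff[OF \<mu>, of F h] F(2) by simp
  then have "(\<lambda>x. F (x + h) - F x) \<in> L2 \<mu>" "integrable \<mu> (\<lambda>x. F (x + h) - F x)"
    using L2_diff[OF translate_L2(1)[OF \<mu> F(1)] F(1)] F(2) by auto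
  then have "L2_sqnorm \<mu> (\<lambda>x. F (x + h) - F x) = L2_sqnorm \<nu> (fourier_L1 \<mu> (\<lambda>x. F (x + h) - F x))"
    by (simp add: plancherel_L2_sqnorm(2)[OF pl])
  also have "\<dots> = L2_sqnorm \<nu> (\<lambda>\<xi>. (\<xi> h - 1) * fourier_L1 \<mu> F \<xi>)"
    unfolding L2_sqnorm_def using space_dual_haar_measure[OF \<nu>]
    by (intro nn_integral_cong) (auto simp: fourier_L1_translate_diff[OF \<mu> _ F(2)])
  finally show ?thesis .
qed

lemma L2_sqnorm_character_sub_one_mult_le_4:
  assumes \<nu>: "dual_haar_measure \<nu>"
  shows "L2_sqnorm \<nu> (\<lambda>\<xi>. (\<xi> h - 1) * u \<xi>) \<le> 4 * L2_sqnorm \<nu> u"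
proof -
  have "L2_sqnorm \<nu> (\<lambda>\<xi>. (\<xi> h - 1) * u \<xi>) \<le> (\<integral>\<^sup>+\<xi>. 4 * ennreal ((cmod (u \<xi>))\<^sup>2) \<partial>\<nu>)"
    unfolding L2_sqnorm_def
  proof (rule nn_integral_mono)
    fix \<xi> assume "\<xi> \<in> space \<nu>"
    then have "cmod (\<xi> h - 1) \<le> 2"
      using space_dual_haar_measure[OF \<nu>] norm_character_sub_one_le by blast
    then have "(cmod (\<xi> h - 1))\<^sup>2 * (cmod (u \<xi>))\<^sup>2 \<le> 2\<^sup>2 * (cmod (u \<xi>))\<^sup>2"
      by (intro mult_right_mono power_mono) simp_all
    then have "ennreal ((cmod ((\<xi> h - 1) * u \<xi>))\<^sup>2) \<le> ennreal (4 * (cmod (u \<xi>))\<^sup>2)"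
      by (intro ennreal_leI) (simp add: norm_mult power_mult_distrib)
    then show "ennreal ((cmod ((\<xi> h - 1) * u \<xi>))\<^sup>2) \<le> 4 * ennreal ((cmod (u \<xi>))\<^sup>2)"
      using ennreal_mult'[of 4 "(cmod (u \<xi>))\<^sup>2"] by simp
  qed
  also have "\<dots> \<le> 4 * L2_sqnorm \<nu> u"
    unfolding L2_sqnorm_def by (rule nn_integral_cmult_le) simp
  finally show ?thesis .
qed

lemma L2_sqnorm_translate_diff_le_fourier:
  fixes \<mu> :: "'g::topological_ab_group_add measure"
  assumes \<mu>: "haar_measure \<mu>" and \<nu>: "dual_haar_measure \<nu>" and pl: "plancherel_normalized \<mu> \<nu>"
    and f: "f \<in> L2 \<mu>"
  shows "L2_sqnorm \<mu> (\<lambda>x. f (x + h) - f x) \<le> L2_sqnorm \<nu> (\<lambda>\<xi>. (\<xi> h - 1) * fourier_L2 \<mu> \<nu> f \<xi>)"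
proof -
  obtain F where F: "\<And>n. F n \<in> L2 \<mu>" "\<And>n. integrable \<mu> (F n)"
    and f_hat: "fourier_L2 \<mu> \<nu> f \<in> L2 \<nu>"
    and lim1: "(\<lambda>n. L2_sqnorm \<mu> (\<lambda>x. F n x - f x)) \<longlonglongrightarrow> 0"
    and lim2: "(\<lambda>n. L2_sqnorm \<nu> (\<lambda>\<xi>. fourier_L1 \<mu> (F n) \<xi> - fourier_L2 \<mu> \<nu> f \<xi>)) \<longlonglongrightarrow> 0"
    using fourier_L2_approximation[OF \<mu> \<nu> pl f] by blast
  have [measurable]: "f \<in> borel_measurable \<mu>" "F n \<in> borel_measurable \<mu>"
    "fourier_L2 \<mu> \<nu> f \<in> borel_measurable \<nu>" "fourier_L1 \<mu> (F n) \<in> borel_measurable \<nu>"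
    "(\<lambda>\<xi>. \<xi> h) \<in> borel_measurable \<nu>" for n
    using f F f_hat plancherel_L2_sqnorm(1)[OF pl F(1,2)] borel_measurable_dual_eval[OF \<nu>]
    by (auto simp: L2_def)
  have [measurable]: "(\<lambda>x. f (x + h)) \<in> borel_measurable \<mu>" "(\<lambda>x. F n (x + h)) \<in> borel_measurable \<mu>" for n
    by (rule borel_measurable_haar_translate[OF \<mu>]; measurable)+
  show ?thesis
  proof (rule L2_sqnorm_le_of_approx[where v="\<lambda>n x. F n (x + h) - F n x"
        and z="\<lambda>n \<xi>. (\<xi> h - 1) * fourier_L1 \<mu> (F n) \<xi>"])
    show "L2_sqnorm \<mu> (\<lambda>x. F n (x + h) - F n x) = L2_sqnorm \<nu> (\<lambda>\<xi>. (\<xi> h - 1) * fourier_L1 \<mu> (F n) \<xi>)"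
      for n
      using F by (rule L2_sqnorm_translate_diff_eq_fourier[OF \<mu> \<nu> pl])
    have "L2_sqnorm \<mu> (\<lambda>x. (f (x + h) - f x) - (F n (x + h) - F n x))
        \<le> 4 * L2_sqnorm \<mu> (\<lambda>x. F n x - f x)" for n
      using L2_sqnorm_translate_diff_le[OF \<mu> L2_diff[OF f F(1)], of h]
      by (simp add: algebra_simps L2_sqnorm_minus_commute[of _ f])
    then show "(\<lambda>n. L2_sqnorm \<mu> (\<lambda>x. (f (x + h) - f x) - (F n (x + h) - F n x))) \<longlonglongrightarrow> 0"
      using lim1 by (rule tendsto_zero_ennreal_cmult_bound) simp
    have "L2_sqnorm \<nu> (\<lambda>\<xi>. (\<xi> h - 1) * fourier_L1 \<mu> (F n) \<xi> - (\<xi> h - 1) * fourier_L2 \<mu> \<nu> f \<xi>)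
        \<le> 4 * L2_sqnorm \<nu> (\<lambda>\<xi>. fourier_L1 \<mu> (F n) \<xi> - fourier_L2 \<mu> \<nu> f \<xi>)" for n
      using L2_sqnorm_character_sub_one_mult_le_4[OF \<nu>]
      by (simp flip: right_diff_distrib)
    then show "(\<lambda>n. L2_sqnorm \<nu> (\<lambda>\<xi>. (\<xi> h - 1) * fourier_L1 \<mu> (F n) \<xi> - (\<xi> h - 1) * fourier_L2 \<mu> \<nu> f \<xi>))
        \<longlonglongrightarrow> 0"
      using lim2 by (rule tendsto_zero_ennreal_cmult_bound) simp
  qed measurable
qed

definition translation_modulus ::
    "(('g::topological_ab_group_add \<Rightarrow> complex) \<Rightarrow> real) \<Rightarrow> real \<Rightarrow> 'g \<Rightarrow> ennreal" where
  "translation_modulus \<gamma> s h =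
     (SUP \<xi>\<in>dual_group. ennreal ((cmod (\<xi> h - 1))\<^sup>2 / (1 + (\<gamma> \<xi>)\<^sup>2) powr s))"

lemma divide_le_self_of_one_le: "0 \<le> x \<Longrightarrow> 1 \<le> p \<Longrightarrow> x / p \<le> x"
  for x p :: real
  by (simp add: divide_le_eq mult_le_cancel_left1)

lemma one_le_sobolev_weight: "0 \<le> s \<Longrightarrow> 1 \<le> (1 + x\<^sup>2) powr s"
  for x s :: real
  by (intro ge_one_powr_ge_zero) auto

lemma translation_modulus_le_4:
  assumes "0 \<le> s"
  shows "translation_modulus \<gamma> s h \<le> 4"
  unfolding translation_modulus_def
proof (rule SUP_least)
  fix \<xi> :: "'a \<Rightarrow> complex" assume "\<xi> \<in> dual_group"
  then have "(cmod (\<xi> h - 1))\<^sup>2 \<le> 2\<^sup>2"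
    using norm_character_sub_one_le[of \<xi> h] by (intro power_mono) simp_all
  moreover have "(cmod (\<xi> h - 1))\<^sup>2 / (1 + (\<gamma> \<xi>)\<^sup>2) powr s \<le> (cmod (\<xi> h - 1))\<^sup>2"
    using one_le_sobolev_weight[OF assms, of "\<gamma> \<xi>"]
    by (intro divide_le_self_of_one_le) simp_all
  ultimately have "(cmod (\<xi> h - 1))\<^sup>2 / (1 + (\<gamma> \<xi>)\<^sup>2) powr s \<le> 4" by simp
  then show "ennreal ((cmod (\<xi> h - 1))\<^sup>2 / (1 + (\<gamma> \<xi>)\<^sup>2) powr s) \<le> 4"
    using ennreal_leI[of _ 4] by simp
qed

lemma translation_modulus_small:
  assumes "0 \<le> s" and "\<epsilon> > 0"
    and "\<And>\<xi>. \<xi> \<in> dual_group \<Longrightarrow> cmod (\<xi> h - 1) / (1 + (\<gamma> \<xi>)\<^sup>2) powr s \<le> \<epsilon> / 2"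
  shows "translation_modulus \<gamma> s h \<le> ennreal \<epsilon>"
  unfolding translation_modulus_def
proof (rule SUP_least)
  fix \<xi> :: "'a \<Rightarrow> complex" assume \<xi>: "\<xi> \<in> dual_group"
  have "(cmod (\<xi> h - 1))\<^sup>2 / (1 + (\<gamma> \<xi>)\<^sup>2) powr s
      = cmod (\<xi> h - 1) * (cmod (\<xi> h - 1) / (1 + (\<gamma> \<xi>)\<^sup>2) powr s)"
    by (simp add: power2_eq_square)
  also have "\<dots> \<le> 2 * (\<epsilon> / 2)"
    using assms(3)[OF \<xi>] norm_character_sub_one_le[OF \<xi>] one_le_sobolev_weight[OF assms(1)]
    by (intro mult_mono) auto
  finally show "ennreal ((cmod (\<xi> h - 1))\<^sup>2 / (1 + (\<gamma> \<xi>)\<^sup>2) powr s) \<le> ennreal \<epsilon>"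
    by (intro ennreal_leI) simp
qed

lemma L2_sqnorm_character_sub_one_mult_le_modulus:
  assumes \<nu>: "dual_haar_measure \<nu>" and "0 \<le> s"
  shows "L2_sqnorm \<nu> (\<lambda>\<xi>. (\<xi> h - 1) * g \<xi>)
    \<le> translation_modulus \<gamma> s h * (\<integral>\<^sup>+\<xi>. ennreal ((1 + (\<gamma> \<xi>)\<^sup>2) powr s * (cmod (g \<xi>))\<^sup>2) \<partial>\<nu>)"
proof -
  have "L2_sqnorm \<nu> (\<lambda>\<xi>. (\<xi> h - 1) * g \<xi>)
      \<le> (\<integral>\<^sup>+\<xi>. translation_modulus \<gamma> s h * ennreal ((1 + (\<gamma> \<xi>)\<^sup>2) powr s * (cmod (g \<xi>))\<^sup>2) \<partial>\<nu>)"
    unfolding L2_sqnorm_def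
  proof (rule nn_integral_mono)
    fix \<xi> assume "\<xi> \<in> space \<nu>"
    then have \<xi>: "\<xi> \<in> dual_group" using space_dual_haar_measure[OF \<nu>] by blast
    define w where "w = (1 + (\<gamma> \<xi>)\<^sup>2) powr s"
    have "w > 0" using one_le_sobolev_weight[OF \<open>0 \<le> s\<close>, of "\<gamma> \<xi>"] unfolding w_def by linarith
    then have "(cmod ((\<xi> h - 1) * g \<xi>))\<^sup>2 = ((cmod (\<xi> h - 1))\<^sup>2 / w) * (w * (cmod (g \<xi>))\<^sup>2)"
      by (simp add: norm_mult power_mult_distrib)
    then have "ennreal ((cmod ((\<xi> h - 1) * g \<xi>))\<^sup>2)
        = ennreal ((cmod (\<xi> h - 1))\<^sup>2 / w) * ennreal (w * (cmod (g \<xi>))\<^sup>2)"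
      using \<open>w > 0\<close> by (simp only:) (rule ennreal_mult; simp)
    also have "\<dots> \<le> translation_modulus \<gamma> s h * ennreal (w * (cmod (g \<xi>))\<^sup>2)"
      unfolding translation_modulus_def w_def by (intro mult_right_mono SUP_upper[OF \<xi>]) simp
    finally show "ennreal ((cmod ((\<xi> h - 1) * g \<xi>))\<^sup>2)
        \<le> translation_modulus \<gamma> s h * ennreal ((1 + (\<gamma> \<xi>)\<^sup>2) powr s * (cmod (g \<xi>))\<^sup>2)"
      by (simp only: w_def)
  qed
  also have "\<dots> \<le> translation_modulus \<gamma> s h * (\<integral>\<^sup>+\<xi>. ennreal ((1 + (\<gamma> \<xi>)\<^sup>2) powr s * (cmod (g \<xi>))\<^sup>2) \<partial>\<nu>)"
    using le_less_trans[OF translation_modulus_le_4[OF \<open>0 \<le> s\<close>, of \<gamma> h]]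
    by (intro nn_integral_cmult_le) simp
  finally show ?thesis .
qed

theorem lemma1:
  fixes \<mu> :: "'g::{topological_ab_group_add, t2_space} measure"
    and \<nu> :: "('g \<Rightarrow> complex) measure"
    and \<gamma> :: "('g \<Rightarrow> complex) \<Rightarrow> real"
    and s :: real
  assumes "locally_compact_space (euclidean :: 'g topology)"
    and "haar_measure \<mu>"
    and "dual_haar_measure \<nu>"
    and "plancherel_normalized \<mu> \<nu>"
    and "Gamma_class \<gamma>"
    and "0 \<le> s"
    and "\<forall>\<epsilon>>0. \<exists>U. open U \<and> 0 \<in> U \<and>
           (\<forall>h\<in>U. \<forall>\<xi>\<in>dual_group. cmod (\<xi> h - 1) / (1 + (\<gamma> \<xi>)\<^sup>2) powr s \<le> \<epsilon>)"
  shows "\<exists>C :: 'g \<Rightarrow> ennreal.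
           (\<forall>\<epsilon>>0. \<exists>U. open U \<and> 0 \<in> U \<and> (\<forall>h\<in>U. C h \<le> ennreal \<epsilon>)) \<and>
           (\<forall>f\<in>Hs \<mu> \<nu> \<gamma> s. \<forall>h.
              (\<integral>\<^sup>+ x. ennreal ((cmod (f (x + h) - f x))\<^sup>2) \<partial>\<mu>) \<le> C h * Hs_norm2 \<mu> \<nu> \<gamma> s f)"
proof (intro exI[of _ "translation_modulus \<gamma> s"] conjI allI impI ballI)
  fix \<epsilon> :: real assume "\<epsilon> > 0"
  then obtain U where U: "open U" "0 \<in> U"
    "\<And>h \<xi>. h \<in> U \<Longrightarrow> \<xi> \<in> dual_group \<Longrightarrow> cmod (\<xi> h - 1) / (1 + (\<gamma> \<xi>)\<^sup>2) powr s \<le> \<epsilon> / 2"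
    using assms(7)[rule_format, of "\<epsilon> / 2"] by auto
  have "translation_modulus \<gamma> s h \<le> ennreal \<epsilon>" if "h \<in> U" for h
    using U(3)[OF that] by (rule translation_modulus_small[OF \<open>0 \<le> s\<close> \<open>\<epsilon> > 0\<close>])
  then show "\<exists>U. open U \<and> 0 \<in> U \<and> (\<forall>h\<in>U. translation_modulus \<gamma> s h \<le> ennreal \<epsilon>)"
    using U(1,2) by blast
next
  fix f h assume "f \<in> Hs \<mu> \<nu> \<gamma> s"
  then have "f \<in> L2 \<mu>" by (simp add: Hs_def)
  then have "L2_sqnorm \<mu> (\<lambda>x. f (x + h) - f x)
      \<le> L2_sqnorm \<nu> (\<lambda>\<xi>. (\<xi> h - 1) * fourier_L2 \<mu> \<nu> f \<xi>)"
    using assms(2-4) by (intro L2_sqnorm_translate_diff_le_fourier)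
  also have "\<dots> \<le> translation_modulus \<gamma> s h * Hs_norm2 \<mu> \<nu> \<gamma> s f"
    unfolding Hs_norm2_def using assms(3,6) by (rule L2_sqnorm_character_sub_one_mult_le_modulus)
  finally show "(\<integral>\<^sup>+ x. ennreal ((cmod (f (x + h) - f x))\<^sup>2) \<partial>\<mu>)
      \<le> translation_modulus \<gamma> s h * Hs_norm2 \<mu> \<nu> \<gamma> s f"
    by (simp add: L2_sqnorm_def)
qed

end
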